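(* Let $G$ be a finite group and $\mathcal{H}$ a special set of subgroups of $G$ with $d_G(\mathcal{H})>1$. Let $p$ be a prime divisor of $d_G(\mathcal{H})$ and $P$ a $p$-Sylow subgroup of $G$. Then there is a subset $\mathcal{H}_P^{*}$ of $\mathcal{H}_P^{\mathrm{set}}$ which is special (as a set of subgroups of $P$) and satisfies $\#\mathcal{H}_P^{*}\geq\#\mathcal{H}$.
   Context: For a subgroup $H$ of a finite group $G$, $N^G(H):=\bigcap_{g\in G}gHg^{-1}$ is its normal core. A set $\mathcal{H}$ of subgroups of $G$ is special if $G\notin\mathcal{H}$, $\#\mathcal{H}\geq2$, and for all $H,H'\in\mathcal{H}$ with $H\neq H'$ one has $N^G(H)H'=G$ or $N^G(H')H=G$. $d_G(\mathcal{H}):=\gcd((G:H)\mid H\in\mathcal{H})$. For a subgroup $P\leq G$, $\mathcal{H}_P$ is the multiset of subgroups of $P$ consisting of $P\cap gHg^{-1}$ for every $H\in\mathcal{H}$ and every $g$ in a fixed complete set of representatives of $P\backslash G/H$; $\mathcal{H}_P^{\mathrm{set}}$ is its underlying set. *)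

theory Defs
  imports "HOL-Algebra.Algebra" "HOL-Computational_Algebra.Primes"
begin

definition conj_sub :: "('a, 'b) monoid_scheme \<Rightarrow> 'a \<Rightarrow> 'a set \<Rightarrow> 'a set" where
  "conj_sub G g H = (g <#\<^bsub>G\<^esub> H) #>\<^bsub>G\<^esub> inv\<^bsub>G\<^esub> g"

definition normal_core :: "('a, 'b) monoid_scheme \<Rightarrow> 'a set \<Rightarrow> 'a set" where
  "normal_core G H = (\<Inter>g\<in>carrier G. conj_sub G g H)"

definition special :: "('a, 'b) monoid_scheme \<Rightarrow> 'a set set \<Rightarrow> bool" where
  "special G \<H> \<longleftrightarrow> (\<forall>H\<in>\<H>. subgroup H G) \<and> carrier G \<notin> \<H> \<and> card \<H> \<ge> 2 \<and>
     (\<forall>H\<in>\<H>. \<forall>H'\<in>\<H>. H \<noteq> H' \<longrightarrow>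
        normal_core G H <#>\<^bsub>G\<^esub> H' = carrier G \<or> normal_core G H' <#>\<^bsub>G\<^esub> H = carrier G)"

definition sub_index :: "('a, 'b) monoid_scheme \<Rightarrow> 'a set \<Rightarrow> nat" where
  "sub_index G H = card (carrier G) div card H"

definition d_G :: "('a, 'b) monoid_scheme \<Rightarrow> 'a set set \<Rightarrow> nat" where
  "d_G G \<H> = Gcd (sub_index G ` \<H>)"

definition sylow_subgroup :: "('a, 'b) monoid_scheme \<Rightarrow> nat \<Rightarrow> 'a set \<Rightarrow> bool" where
  "sylow_subgroup G p P \<longleftrightarrow> subgroup P G \<and> card P = p ^ multiplicity p (card (carrier G))"

definition double_coset :: "('a, 'b) monoid_scheme \<Rightarrow> 'a set \<Rightarrow> 'a \<Rightarrow> 'a set \<Rightarrow> 'a set" where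
  "double_coset G P g H = (P #>\<^bsub>G\<^esub> g) <#>\<^bsub>G\<^esub> H"

definition double_coset_reps :: "('a, 'b) monoid_scheme \<Rightarrow> 'a set \<Rightarrow> 'a set \<Rightarrow> 'a set \<Rightarrow> bool" where
  "double_coset_reps G P H R \<longleftrightarrow> R \<subseteq> carrier G \<and>
     (\<forall>g\<in>carrier G. \<exists>!r. r \<in> R \<and> g \<in> double_coset G P r H)"

(* underlying set of the multiset H_P, w.r.t. chosen representatives R H for each H *)
definition H_P_set :: "('a, 'b) monoid_scheme \<Rightarrow> 'a set \<Rightarrow> 'a set set \<Rightarrow> ('a set \<Rightarrow> 'a set) \<Rightarrow> 'a set set" where
  "H_P_set G P \<H> R = {P \<inter> conj_sub G g H | H g. H \<in> \<H> \<and> g \<in> R H}"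

end

theory Submission
  imports Defs
begin

text \<open>
  For each \<open>H \<in> \<H>\<close> some double coset \<open>P r H\<close> has \<open>P \<inter> r H r\<inverse>\<close> a Sylow
  \<open>p\<close>-subgroup of \<open>r H r\<inverse>\<close>: otherwise every double coset, of order
  \<open>|P| |H| / |P \<inter> r H r\<inverse>|\<close>, and hence \<open>G\<close> itself would have order divisible by \<open>p |P|\<close>.
  Let \<open>F H = P \<inter> r H r\<inverse>\<close> for such an \<open>r\<close>. If \<open>N\<^sup>G(H) H' = G\<close>, comparing \<open>p\<close>-parts in
  the product formula \<open>|A B| |A \<inter> B| = |A| |B|\<close> shows \<open>(N\<^sup>G(H) \<inter> P) (F H') = P\<close>; and
  \<open>N\<^sup>G(H) \<inter> P\<close> is normal in \<open>P\<close> and contained in \<open>F H\<close>, hence in \<open>N\<^sup>P(F H)\<close>. As \<open>p\<close>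
  divides \<open>(G:H)\<close>, each \<open>F H\<close> is a proper subgroup of \<open>P\<close>, so \<open>N\<^sup>P(F H) F H = F H \<noteq> P\<close>;
  this makes \<open>F\<close> injective on \<open>\<H>\<close>, and \<open>F ` \<H>\<close> is special in \<open>P\<close>.
\<close>

context group
begin

subsection \<open>Conjugate subgroups and normal cores\<close>

lemma inv_mult_cancel [simp]: "x \<in> carrier G \<Longrightarrow> y \<in> carrier G \<Longrightarrow> inv x \<otimes> (x \<otimes> y) = y"
  by (simp add: m_assoc [symmetric])

lemma mult_inv_cancel [simp]: "x \<in> carrier G \<Longrightarrow> y \<in> carrier G \<Longrightarrow> x \<otimes> (inv x \<otimes> y) = y"
  by (simp add: m_assoc [symmetric])

lemma conj_sub_eq_image: "conj_sub G g H = (\<lambda>h. g \<otimes> h \<otimes> inv g) ` H"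
  unfolding conj_sub_def l_coset_def r_coset_def by auto

lemma mem_conj_sub_iff:
  assumes "g \<in> carrier G" and "H \<subseteq> carrier G"
  shows "x \<in> conj_sub G g H \<longleftrightarrow> x \<in> carrier G \<and> inv g \<otimes> x \<otimes> g \<in> H"
proof
  assume "x \<in> conj_sub G g H"
  then obtain h where "h \<in> H" and "x = g \<otimes> h \<otimes> inv g"
    by (auto simp: conj_sub_eq_image)
  with assms show "x \<in> carrier G \<and> inv g \<otimes> x \<otimes> g \<in> H"
    by (auto simp: m_assoc)
next
  assume x: "x \<in> carrier G \<and> inv g \<otimes> x \<otimes> g \<in> H"
  with assms(1) have "x = g \<otimes> (inv g \<otimes> x \<otimes> g) \<otimes> inv g"
    by (simp add: m_assoc)
  with x show "x \<in> conj_sub G g H"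
    unfolding conj_sub_eq_image by blast
qed

lemma conj_sub_one [simp]: "H \<subseteq> carrier G \<Longrightarrow> conj_sub G \<one> H = H"
  by (force simp: conj_sub_eq_image)

lemma subgroup_conj_sub: "g \<in> carrier G \<Longrightarrow> subgroup H G \<Longrightarrow> subgroup (conj_sub G g H) G"
  unfolding conj_sub_def by (rule subgroup_conjugation_is_surj2)

lemma card_conj_sub:
  assumes "g \<in> carrier G" and "H \<subseteq> carrier G"
  shows "card (conj_sub G g H) = card H"
proof -
  have "inj_on (\<lambda>h. g \<otimes> h \<otimes> inv g) H"
    using assms inj_on_cmult [of g] inj_on_multc [of "inv g"]
    by (auto simp: inj_on_def subset_iff)
  then show ?thesis
    by (simp add: conj_sub_eq_image card_image)
qed

lemma mem_normal_core_iff: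
  assumes "H \<subseteq> carrier G"
  shows "x \<in> normal_core G H \<longleftrightarrow> x \<in> carrier G \<and> (\<forall>g\<in>carrier G. inv g \<otimes> x \<otimes> g \<in> H)"
  unfolding normal_core_def using mem_conj_sub_iff [OF _ assms] by auto

lemma normal_core_subset_conj_sub: "g \<in> carrier G \<Longrightarrow> normal_core G H \<subseteq> conj_sub G g H"
  unfolding normal_core_def by blast

lemma normal_core_subset: "H \<subseteq> carrier G \<Longrightarrow> normal_core G H \<subseteq> H"
  using normal_core_subset_conj_sub [OF one_closed, of H] by simp

lemma normal_core_normal:
  assumes H: "subgroup H G"
  shows "normal_core G H \<lhd> G"
proof -
  have Hc: "H \<subseteq> carrier G"
    using H subgroup.subset by blast
  have "subgroup (normal_core G H) G"
    unfolding normal_core_def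
    by (rule subgroups_Inter) (auto intro: subgroup_conj_sub [OF _ H])
  moreover have "x \<otimes> h \<otimes> inv x \<in> normal_core G H"
    if x: "x \<in> carrier G" and h: "h \<in> normal_core G H" for x h
  proof -
    have "h \<in> carrier G"
      using h mem_normal_core_iff [OF Hc] by blast
    moreover have "inv g \<otimes> (x \<otimes> h \<otimes> inv x) \<otimes> g = inv (inv x \<otimes> g) \<otimes> h \<otimes> (inv x \<otimes> g)"
      if "g \<in> carrier G" for g
      using that x \<open>h \<in> carrier G\<close> by (simp add: inv_mult_group m_assoc)
    ultimately show ?thesis
      using x h mem_normal_core_iff [OF Hc] by auto
  qed
  ultimately show ?thesis
    by (simp add: normal_inv_iff)
qed

lemma normal_subset_normal_core:
  assumes "N \<lhd> G" and "N \<subseteq> H" and "H \<subseteq> carrier G"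
  shows "N \<subseteq> normal_core G H"
  using assms normal.inv_op_closed1 [OF assms(1)] normal_imp_subgroup [THEN subgroup.subset]
  by (force simp: mem_normal_core_iff)

lemma normal_core_set_mult_self:
  assumes "subgroup K G"
  shows "normal_core G K <#> K = K"
proof
  have "normal_core G K \<subseteq> K"
    using assms normal_core_subset subgroup.subset by blast
  then show "normal_core G K <#> K \<subseteq> K"
    using assms by (auto simp: set_mult_def intro: subgroup.m_closed)
  have "\<one> \<in> normal_core G K"
    using assms normal_core_normal normal_imp_subgroup subgroup.one_closed by blast
  then show "K \<subseteq> normal_core G K <#> K"
    using assms subgroup.subset by (force simp: set_mult_def)
qed

lemma normal_set_mult_conj_sub_eq_carrier:
  assumes N: "N \<lhd> G" and H: "H \<subseteq> carrier G" and NH: "N <#> H = carrier G"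
    and g: "g \<in> carrier G"
  shows "N <#> conj_sub G g H = carrier G"
proof
  show "N <#> conj_sub G g H \<subseteq> carrier G"
    using N H g by (intro setmult_subset_G) (auto simp: mem_conj_sub_iff normal_imp_subgroup subgroup.subset)
  show "carrier G \<subseteq> N <#> conj_sub G g H"
  proof
    fix x assume x: "x \<in> carrier G"
    then have "inv g \<otimes> x \<otimes> g \<in> N <#> H"
      using NH g by simp
    then obtain n h where nh: "n \<in> N" "h \<in> H" and nh_eq: "inv g \<otimes> x \<otimes> g = n \<otimes> h"
      unfolding set_mult_def by blast
    have "n \<in> carrier G" "h \<in> carrier G"
      using N H nh normal_imp_subgroup subgroup.subset by blast+
    have "x = g \<otimes> (inv g \<otimes> x \<otimes> g) \<otimes> inv g"
      using x g by (simp add: m_assoc)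
    also have "\<dots> = (g \<otimes> n \<otimes> inv g) \<otimes> (g \<otimes> h \<otimes> inv g)"
      using g \<open>n \<in> carrier G\<close> \<open>h \<in> carrier G\<close> by (simp add: nh_eq m_assoc)
    finally have "x = (g \<otimes> n \<otimes> inv g) \<otimes> (g \<otimes> h \<otimes> inv g)" .
    moreover have "g \<otimes> n \<otimes> inv g \<in> N"
      using normal.inv_op_closed2 [OF N g nh(1)] .
    moreover have "g \<otimes> h \<otimes> inv g \<in> conj_sub G g H"
      using nh(2) by (simp add: conj_sub_eq_image)
    ultimately show "x \<in> N <#> conj_sub G g H"
      unfolding set_mult_def by blast
  qed
qed

subsection \<open>The product formula\<close>

lemma rcos_Int_subgroup:
  assumes A: "subgroup A G" and B: "subgroup B G" and b: "b \<in> B"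
  shows "(A #> b) \<inter> B = (A \<inter> B) #> b"
proof
  show "(A #> b) \<inter> B \<subseteq> (A \<inter> B) #> b"
  proof
    fix x assume "x \<in> (A #> b) \<inter> B"
    then obtain a where a: "a \<in> A" and x: "x = a \<otimes> b" "x \<in> B"
      unfolding r_coset_def by blast
    have "a = x \<otimes> inv b"
      using a b x A B by (simp add: m_assoc subgroup.mem_carrier)
    moreover have "x \<otimes> inv b \<in> B"
      using x(2) b B by (simp add: subgroup.m_closed subgroup.m_inv_closed)
    ultimately have "a \<in> B"
      by simp
    with a x show "x \<in> (A \<inter> B) #> b"
      unfolding r_coset_def by blast
  qed
  show "(A \<inter> B) #> b \<subseteq> (A #> b) \<inter> B"
    using b B unfolding r_coset_def by (auto intro: subgroup.m_closed)
qed

lemma card_set_mult_mult_card_Int: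
  assumes fin: "finite (carrier G)" and A: "subgroup A G" and B: "subgroup B G"
  shows "card (A <#> B) * card (A \<inter> B) = card A * card B"
proof -
  have Ac: "A \<subseteq> carrier G" and Bc: "B \<subseteq> carrier G"
    using A B subgroup.subset by auto
  define C where "C = (\<lambda>b. A #> b) ` B"
  have C_rcosets: "C \<subseteq> rcosets A"
    unfolding C_def RCOSETS_def using Bc by auto
  have finite_C: "finite C"
    unfolding C_def using Bc fin finite_subset by blast
  have AB_eq: "A <#> B = \<Union>C"
    unfolding C_def set_mult_def r_coset_def by auto
  txt \<open>The cosets \<open>A #> b\<close> partition \<open>A <#> B\<close>, and intersecting with \<open>B\<close> maps them
    bijectively onto the cosets of \<open>A \<inter> B\<close> in \<open>B\<close>.\<close>
  have "card A * card C = card (A <#> B)"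
    unfolding AB_eq
  proof (rule card_partition [OF finite_C])
    show "finite (\<Union>C)"
      using AB_eq setmult_subset_G [OF Ac Bc] fin finite_subset by metis
    show "card c = card A" if "c \<in> C" for c
      using that C_rcosets card_rcosets_equal [OF _ Ac] by auto
    show "c1 \<inter> c2 = {}" if "c1 \<in> C" "c2 \<in> C" "c1 \<noteq> c2" for c1 c2
      using that rcos_disjoint [OF A] C_rcosets unfolding pairwise_def disjnt_def by blast
  qed
  moreover have "inj_on (\<lambda>c. c \<inter> B) C"
  proof (rule inj_onI)
    fix c c' assume "c \<in> C" "c' \<in> C" and eq: "c \<inter> B = c' \<inter> B"
    then obtain b b' where b: "b \<in> B" "c = A #> b" and b': "b' \<in> B" "c' = A #> b'"
      unfolding C_def by blast
    have "b \<in> c'"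
      using eq b Bc rcos_self [OF _ A] by blast
    then show "c = c'"
      using b b' Bc repr_independence [OF _ _ A] by blast
  qed
  moreover have "(\<lambda>c. c \<inter> B) ` C = rcosets\<^bsub>G\<lparr>carrier := B\<rparr>\<^esub> (A \<inter> B)"
    unfolding C_def RCOSETS_def using rcos_Int_subgroup [OF A B] by auto
  moreover have "card (rcosets\<^bsub>G\<lparr>carrier := B\<rparr>\<^esub> (A \<inter> B)) * card (A \<inter> B) = card B"
    using group.lagrange [OF subgroup_imp_group [OF B] subgroup_incl [OF subgroups_Inter_pair [OF A B] B]]
    by (simp add: order_def)
  ultimately show ?thesis
    by (metis card_image mult.assoc)
qed

lemma multiplicity_card_set_mult:
  fixes p :: nat
  assumes fin: "finite (carrier G)" and p: "prime_elem p" and A: "subgroup A G" and B: "subgroup B G"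
  shows "multiplicity p (card (A <#> B)) + multiplicity p (card (A \<inter> B))
    = multiplicity p (card A) + multiplicity p (card B)"
proof -
  have nonzero: "card A \<noteq> 0" "card B \<noteq> 0" "card (A \<inter> B) \<noteq> 0"
    using fin A B subgroups_Inter_pair [OF A B] subgroup.finite_imp_card_positive by (metis not_gr0)+
  have product: "card (A <#> B) * card (A \<inter> B) = card A * card B"
    using card_set_mult_mult_card_Int [OF fin A B] .
  with nonzero have "card (A <#> B) \<noteq> 0"
    by (metis mult_0 mult_is_0)
  with product nonzero show ?thesis
    by (metis prime_elem_multiplicity_mult_distrib [OF p])
qed

lemma multiplicity_card_subgroup_mono:
  fixes p :: nat
  assumes fin: "finite (carrier G)" and S: "subgroup S G" and T: "subgroup T G" and "S \<subseteq> T"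
  shows "multiplicity p (card S) \<le> multiplicity p (card T)"
proof (rule dvd_imp_multiplicity_le)
  have "card (rcosets\<^bsub>G\<lparr>carrier := T\<rparr>\<^esub> S) * card S = card T"
    using group.lagrange [OF subgroup_imp_group [OF T] subgroup_incl [OF S T \<open>S \<subseteq> T\<close>]]
    by (simp add: order_def)
  then show "card S dvd card T"
    by (metis dvd_triv_right)
  show "card T \<noteq> 0"
    using fin T subgroup.finite_imp_card_positive by (metis not_gr0)
qed

lemma multiplicity_card_less_if_dvd_sub_index:
  fixes p :: nat
  assumes fin: "finite (carrier G)" and p: "prime_elem p" and H: "subgroup H G"
    and p_dvd: "p dvd sub_index G H"
  shows "multiplicity p (card H) < multiplicity p (card (carrier G))"
proof -
  have card_H: "card H \<noteq> 0"
    using fin H subgroup.finite_imp_card_positive by (metis not_gr0)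
  have "card (rcosets H) * card H = card (carrier G)"
    using lagrange [OF H] by (simp add: order_def)
  then have index: "sub_index G H * card H = card (carrier G)"
    unfolding sub_index_def by (metis dvd_div_mult_self dvd_triv_right)
  have index_nonzero: "sub_index G H \<noteq> 0"
    using index fin by (metis card_0_eq mult_0 empty_iff one_closed)
  have "1 \<le> multiplicity p (sub_index G H)"
    using multiplicity_geI [OF index_nonzero prime_elem_not_unit [OF p], of 1] p_dvd by simp
  moreover have "multiplicity p (card (carrier G))
      = multiplicity p (sub_index G H) + multiplicity p (card H)"
    unfolding index [symmetric] by (rule prime_elem_multiplicity_mult_distrib [OF p index_nonzero card_H])
  ultimately show ?thesis
    by linarith
qed

lemma multiplicity_card_normal_le_Int_sylow:
  fixes p :: nat
  assumes fin: "finite (carrier G)" and p: "prime_elem p" and P: "sylow_subgroup G p P"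
    and N: "N \<lhd> G"
  shows "multiplicity p (card N) \<le> multiplicity p (card (N \<inter> P))"
proof -
  have P_sub: "subgroup P G" and P_card: "multiplicity p (card P) = multiplicity p (card (carrier G))"
    using P p by (simp_all add: sylow_subgroup_def)
  have NP: "subgroup (N <#> P) G"
    using N P_sub by (simp add: second_isomorphism_grp.normal_set_mult_subgroup
        second_isomorphism_grp_def second_isomorphism_grp_axioms_def)
  have "multiplicity p (card (N <#> P)) \<le> multiplicity p (card (carrier G))"
    using multiplicity_card_subgroup_mono [OF fin NP subgroup_self] NP subgroup.subset by blast
  moreover have "multiplicity p (card (N <#> P)) + multiplicity p (card (N \<inter> P))
      = multiplicity p (card N) + multiplicity p (card P)"
    using multiplicity_card_set_mult [OF fin p normal_imp_subgroup [OF N] P_sub] .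
  ultimately show ?thesis
    using P_card by linarith
qed

subsection \<open>Double cosets and Sylow subgroups\<close>

lemma double_coset_eq_rcoset:
  assumes r: "r \<in> carrier G" and P: "P \<subseteq> carrier G" and H: "H \<subseteq> carrier G"
  shows "double_coset G P r H = (P <#> conj_sub G r H) #> r"
proof -
  have "double_coset G P r H = P <#> (r <# H)"
    unfolding double_coset_def using set_mult_assoc [of P "{r}" H] r P H
    by (simp add: r_coset_eq_set_mult l_coset_eq_set_mult)
  also have "r <# H = conj_sub G r H #> r"
    unfolding conj_sub_def using r H by (simp add: coset_mult_assoc l_coset_subset_G)
  also have "P <#> (conj_sub G r H #> r) = (P <#> conj_sub G r H) #> r"
    using r P H by (intro setmult_rcos_assoc) (auto simp: mem_conj_sub_iff)
  finally show ?thesis .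
qed

lemma card_double_coset:
  assumes r: "r \<in> carrier G" and P: "subgroup P G" and H: "subgroup H G"
  shows "card (double_coset G P r H) = card (P <#> conj_sub G r H)"
proof -
  have PH: "P <#> conj_sub G r H \<subseteq> carrier G"
    using r P H subgroup_conj_sub by (intro setmult_subset_G) (auto dest: subgroup.subset)
  have "(P <#> conj_sub G r H) #> r = (\<lambda>x. x \<otimes> r) ` (P <#> conj_sub G r H)"
    unfolding r_coset_def by auto
  with inj_on_g [OF PH r] show ?thesis
    using double_coset_eq_rcoset [OF r] P H subgroup.subset by (metis card_image)
qed

lemma card_carrier_eq_sum_double_cosets:
  assumes fin: "finite (carrier G)" and P: "P \<subseteq> carrier G" and H: "H \<subseteq> carrier G"
    and R: "double_coset_reps G P H R"
  shows "card (carrier G) = (\<Sum>r\<in>R. card (double_coset G P r H))"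
proof -
  have R_sub: "R \<subseteq> carrier G"
    using R unfolding double_coset_reps_def by blast
  have double_coset_sub: "double_coset G P r H \<subseteq> carrier G" if "r \<in> R" for r
    unfolding double_coset_def
    using that R_sub P H by (intro setmult_subset_G r_coset_subset_G) auto
  have unique: "\<exists>!r. r \<in> R \<and> g \<in> double_coset G P r H" if "g \<in> carrier G" for g
    using R that unfolding double_coset_reps_def by blast
  have "carrier G = (\<Union>r\<in>R. double_coset G P r H)"
    using unique double_coset_sub by blast
  moreover have "card (\<Union>r\<in>R. double_coset G P r H) = (\<Sum>r\<in>R. card (double_coset G P r H))"
  proof (rule card_UN_disjoint)
    show "finite R"
      using R_sub fin finite_subset by blast
    show "\<forall>r\<in>R. finite (double_coset G P r H)"
      using double_coset_sub fin finite_subset by blast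
    show "\<forall>r\<in>R. \<forall>r'\<in>R. r \<noteq> r' \<longrightarrow> double_coset G P r H \<inter> double_coset G P r' H = {}"
      using unique double_coset_sub by blast
  qed
  ultimately show ?thesis
    by simp
qed

lemma ex_double_coset_rep_sylow_Int_conj:
  fixes p :: nat
  assumes fin: "finite (carrier G)" and p: "prime_elem p" and P: "sylow_subgroup G p P"
    and H: "subgroup H G" and R: "double_coset_reps G P H R"
  shows "\<exists>r\<in>R. multiplicity p (card H) \<le> multiplicity p (card (P \<inter> conj_sub G r H))"
proof (rule ccontr)
  define a where "a = multiplicity p (card (carrier G))"
  have P_sub: "subgroup P G" and P_card: "multiplicity p (card P) = a"
    using P p by (simp_all add: sylow_subgroup_def a_def)
  have R_sub: "R \<subseteq> carrier G"
    using R unfolding double_coset_reps_def by blast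
  assume "\<not> ?thesis"
  then have small: "multiplicity p (card (P \<inter> conj_sub G r H)) < multiplicity p (card H)"
    if "r \<in> R" for r
    using that by auto
  have "p ^ (a + 1) dvd card (double_coset G P r H)" if r: "r \<in> R" for r
  proof -
    have rc: "r \<in> carrier G"
      using r R_sub by blast
    have "multiplicity p (card (P <#> conj_sub G r H)) + multiplicity p (card (P \<inter> conj_sub G r H))
        = a + multiplicity p (card H)"
      using multiplicity_card_set_mult [OF fin p P_sub subgroup_conj_sub [OF rc H]]
        card_conj_sub [OF rc subgroup.subset [OF H]] P_card by simp
    then have "a + 1 \<le> multiplicity p (card (double_coset G P r H))"
      unfolding card_double_coset [OF rc P_sub H] using small [OF r] by linarith
    then show ?thesis
      by (rule multiplicity_dvd')
  qed
  then have "p ^ (a + 1) dvd card (carrier G)"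
    using card_carrier_eq_sum_double_cosets [OF fin subgroup.subset [OF P_sub] subgroup.subset [OF H] R]
    by (simp add: dvd_sum)
  moreover have "card (carrier G) \<noteq> 0"
    using fin subgroup.finite_imp_card_positive [OF subgroup_self] by (metis not_gr0)
  ultimately have "a + 1 \<le> a"
    unfolding a_def using multiplicity_geI prime_elem_not_unit [OF p] by blast
  then show False
    by simp
qed

subsection \<open>Special sets of subgroups\<close>

lemma sylow_Int_conj_sub_neq:
  fixes p :: nat
  assumes fin: "finite (carrier G)" and p: "prime_elem p" and P: "sylow_subgroup G p P"
    and H: "subgroup H G" and g: "g \<in> carrier G" and p_dvd: "p dvd sub_index G H"
  shows "P \<inter> conj_sub G g H \<noteq> P"
proof
  have P_sub: "subgroup P G" and P_card: "multiplicity p (card P) = multiplicity p (card (carrier G))"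
    using P p by (simp_all add: sylow_subgroup_def)
  assume "P \<inter> conj_sub G g H = P"
  then have "P \<subseteq> conj_sub G g H"
    by blast
  then have "multiplicity p (card P) \<le> multiplicity p (card (conj_sub G g H))"
    by (rule multiplicity_card_subgroup_mono [OF fin P_sub subgroup_conj_sub [OF g H]])
  then show False
    using multiplicity_card_less_if_dvd_sub_index [OF fin p H p_dvd] P_card
      card_conj_sub [OF g subgroup.subset [OF H]] by simp
qed

lemma sylow_Int_normal_set_mult_eq:
  fixes p :: nat
  assumes fin: "finite (carrier G)" and p: "prime_elem p" and P: "sylow_subgroup G p P"
    and N: "N \<lhd> G" and M: "subgroup M G" and NM: "N <#> M = carrier G"
    and M_sylow: "multiplicity p (card M) \<le> multiplicity p (card (P \<inter> M))"
  shows "(N \<inter> P) <#> (P \<inter> M) = P"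
proof -
  have P_sub: "subgroup P G" and P_card: "card P = p ^ multiplicity p (card (carrier G))"
    using P by (simp_all add: sylow_subgroup_def)
  have N_sub: "subgroup N G"
    using N normal_imp_subgroup by blast
  have Q: "subgroup (N \<inter> P) G" and K: "subgroup (P \<inter> M) G"
    using subgroups_Inter_pair N_sub M P_sub by blast+
  have upper: "(N \<inter> P) <#> (P \<inter> M) \<subseteq> P"
    using P_sub unfolding set_mult_def by (auto intro: subgroup.m_closed)
  have "multiplicity p (card (carrier G)) + multiplicity p (card (N \<inter> M))
      = multiplicity p (card N) + multiplicity p (card M)"
    using multiplicity_card_set_mult [OF fin p N_sub M] NM by simp
  moreover have "multiplicity p (card N) \<le> multiplicity p (card (N \<inter> P))"
    using multiplicity_card_normal_le_Int_sylow [OF fin p P N] .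
  moreover have "multiplicity p (card ((N \<inter> P) \<inter> (P \<inter> M))) \<le> multiplicity p (card (N \<inter> M))"
    using subgroups_Inter_pair [OF Q K] subgroups_Inter_pair [OF N_sub M]
    by (rule multiplicity_card_subgroup_mono [OF fin]) blast
  moreover have "multiplicity p (card ((N \<inter> P) <#> (P \<inter> M))) + multiplicity p (card ((N \<inter> P) \<inter> (P \<inter> M)))
      = multiplicity p (card (N \<inter> P)) + multiplicity p (card (P \<inter> M))"
    using multiplicity_card_set_mult [OF fin p Q K] .
  ultimately have "multiplicity p (card (carrier G)) \<le> multiplicity p (card ((N \<inter> P) <#> (P \<inter> M)))"
    using M_sylow by linarith
  then have "card P dvd card ((N \<inter> P) <#> (P \<inter> M))"
    unfolding P_card by (rule multiplicity_dvd')
  moreover have "finite P"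
    using P_sub fin subgroup.subset finite_subset by blast
  moreover have "\<one> \<otimes> \<one> \<in> (N \<inter> P) <#> (P \<inter> M)"
    using Q K subgroup.one_closed unfolding set_mult_def by blast
  ultimately have "card P \<le> card ((N \<inter> P) <#> (P \<inter> M))"
    using upper by (metis card_0_eq dvd_imp_le empty_iff finite_subset not_gr0)
  with upper \<open>finite P\<close> show ?thesis
    by (simp add: card_seteq)
qed

lemma normal_core_sylow_Int_conj_set_mult_eq:
  fixes p :: nat
  assumes fin: "finite (carrier G)" and p: "prime_elem p" and P: "sylow_subgroup G p P"
    and H: "subgroup H G" and H': "subgroup H' G" and g: "g \<in> carrier G" and g': "g' \<in> carrier G"
    and NH': "normal_core G H <#> H' = carrier G"
    and sylow': "multiplicity p (card H') \<le> multiplicity p (card (P \<inter> conj_sub G g' H'))"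
  shows "normal_core (G\<lparr>carrier := P\<rparr>) (P \<inter> conj_sub G g H) <#> (P \<inter> conj_sub G g' H') = P"
proof -
  have P_sub: "subgroup P G"
    using P by (simp add: sylow_subgroup_def)
  interpret P: group "G\<lparr>carrier := P\<rparr>"
    using subgroup_imp_group [OF P_sub] .
  define N where "N = normal_core G H"
  define K where "K = P \<inter> conj_sub G g H"
  define K' where "K' = P \<inter> conj_sub G g' H'"
  have N: "N \<lhd> G"
    unfolding N_def using normal_core_normal [OF H] .
  have "(N \<inter> P) <#> K' = P"
    unfolding K'_def
  proof (rule sylow_Int_normal_set_mult_eq [OF fin p P N subgroup_conj_sub [OF g' H']])
    show "N <#> conj_sub G g' H' = carrier G"
      using normal_set_mult_conj_sub_eq_carrier [OF N subgroup.subset [OF H'] _ g'] NH'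
      unfolding N_def by blast
    show "multiplicity p (card (conj_sub G g' H')) \<le> multiplicity p (card (P \<inter> conj_sub G g' H'))"
      using sylow' card_conj_sub [OF g' subgroup.subset [OF H']] by simp
  qed
  moreover have "N \<inter> P \<subseteq> normal_core (G\<lparr>carrier := P\<rparr>) K"
  proof (rule P.normal_subset_normal_core)
    show "N \<inter> P \<lhd> G\<lparr>carrier := P\<rparr>"
      using normal_Int_subgroup [OF P_sub N] .
    show "N \<inter> P \<subseteq> K"
      unfolding K_def N_def using normal_core_subset_conj_sub [OF g] by blast
  qed (simp add: K_def)
  ultimately have "P \<subseteq> normal_core (G\<lparr>carrier := P\<rparr>) K <#> K'"
    using mono_set_mult by blast
  moreover have "normal_core (G\<lparr>carrier := P\<rparr>) K \<subseteq> P"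
    using P.normal_core_subset [of K] by (auto simp: K_def)
  then have "normal_core (G\<lparr>carrier := P\<rparr>) K <#> K' \<subseteq> P"
    using P_sub unfolding K'_def set_mult_def by (auto intro: subgroup.m_closed)
  ultimately show ?thesis
    unfolding K_def K'_def by blast
qed

end

lemma special_image:
  assumes special: "special G \<H>" and G': "group G'"
    and sub: "\<And>H. H \<in> \<H> \<Longrightarrow> subgroup (F H) G'"
    and proper: "\<And>H. H \<in> \<H> \<Longrightarrow> F H \<noteq> carrier G'"
    and transfer: "\<And>H H'. H \<in> \<H> \<Longrightarrow> H' \<in> \<H> \<Longrightarrow> normal_core G H <#>\<^bsub>G\<^esub> H' = carrier G \<Longrightarrow>
        normal_core G' (F H) <#>\<^bsub>G'\<^esub> F H' = carrier G'"
  shows "special G' (F ` \<H>) \<and> card (F ` \<H>) = card \<H>"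
proof -
  have pair: "normal_core G H <#>\<^bsub>G\<^esub> H' = carrier G \<or> normal_core G H' <#>\<^bsub>G\<^esub> H = carrier G"
    if "H \<in> \<H>" "H' \<in> \<H>" "H \<noteq> H'" for H H'
    using special that unfolding special_def by blast
  have "inj_on F \<H>"
  proof (rule inj_onI, rule ccontr)
    fix H H' assume H: "H \<in> \<H>" and H': "H' \<in> \<H>" and eq: "F H = F H'" and "H \<noteq> H'"
    from pair [OF H H' \<open>H \<noteq> H'\<close>] have "normal_core G' (F H) <#>\<^bsub>G'\<^esub> F H = carrier G'"
    proof
      assume "normal_core G H <#>\<^bsub>G\<^esub> H' = carrier G"
      with transfer [OF H H'] eq show ?thesis
        by simp
    next
      assume "normal_core G H' <#>\<^bsub>G\<^esub> H = carrier G"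
      with transfer [OF H' H] eq show ?thesis
        by simp
    qed
    then show False
      using group.normal_core_set_mult_self [OF G' sub [OF H]] proper [OF H] by simp
  qed
  then have card_eq: "card (F ` \<H>) = card \<H>"
    by (rule card_image)
  have "special G' (F ` \<H>)"
    unfolding special_def
  proof (intro conjI ballI impI)
    show "subgroup K G'" if "K \<in> F ` \<H>" for K
      using that sub by blast
    show "carrier G' \<notin> F ` \<H>"
      using proper by (metis imageE)
    show "2 \<le> card (F ` \<H>)"
      using special card_eq unfolding special_def by simp
    fix K K' assume "K \<in> F ` \<H>" "K' \<in> F ` \<H>" "K \<noteq> K'"
    then obtain H H' where H: "H \<in> \<H>" and H': "H' \<in> \<H>" and "H \<noteq> H'" "K = F H" "K' = F H'"
      by blast
    with pair [OF H H'] transfer [OF H H'] transfer [OF H' H]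
    show "normal_core G' K <#>\<^bsub>G'\<^esub> K' = carrier G' \<or> normal_core G' K' <#>\<^bsub>G'\<^esub> K = carrier G'"
      by blast
  qed
  with card_eq show ?thesis
    by blast
qed

theorem proposition5p3:
  fixes G :: "('a, 'b) monoid_scheme" and \<H> :: "'a set set" and p :: nat and P :: "'a set"
    and R :: "'a set \<Rightarrow> 'a set"
  assumes "group G" and "finite (carrier G)"
    and "special G \<H>" and "d_G G \<H> > 1"
    and "Factorial_Ring.prime p" and "p dvd d_G G \<H>"
    and "sylow_subgroup G p P"
    and "\<forall>H\<in>\<H>. double_coset_reps G P H (R H)"
  shows "\<exists>\<H>s. \<H>s \<subseteq> H_P_set G P \<H> R \<and> special (G\<lparr>carrier := P\<rparr>) \<H>s \<and> card \<H>s \<ge> card \<H>"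
proof -
  interpret group G by fact
  note fin = \<open>finite (carrier G)\<close> and sylow = \<open>sylow_subgroup G p P\<close>
  have p: "prime_elem p"
    using \<open>Factorial_Ring.prime p\<close> by simp
  have P_sub: "subgroup P G"
    using sylow by (simp add: sylow_subgroup_def)
  have sub: "subgroup H G" if "H \<in> \<H>" for H
    using \<open>special G \<H>\<close> that unfolding special_def by blast
  have "\<forall>H\<in>\<H>. \<exists>r\<in>R H. multiplicity p (card H) \<le> multiplicity p (card (P \<inter> conj_sub G r H))"
    using ex_double_coset_rep_sylow_Int_conj [OF fin p sylow sub] assms(8) by blast
  then obtain f where f_rep: "\<And>H. H \<in> \<H> \<Longrightarrow> f H \<in> R H"
    and f_sylow: "\<And>H. H \<in> \<H> \<Longrightarrow> multiplicity p (card H) \<le> multiplicity p (card (P \<inter> conj_sub G (f H) H))"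
    by metis
  have f_carrier: "f H \<in> carrier G" if "H \<in> \<H>" for H
    using f_rep [OF that] assms(8) that unfolding double_coset_reps_def by blast
  define F where "F H = P \<inter> conj_sub G (f H) H" for H
  have F_sub: "subgroup (F H) G" if "H \<in> \<H>" for H
    unfolding F_def using subgroups_Inter_pair [OF P_sub subgroup_conj_sub [OF f_carrier [OF that] sub [OF that]]] .
  have "special (G\<lparr>carrier := P\<rparr>) (F ` \<H>) \<and> card (F ` \<H>) = card \<H>"
  proof (rule special_image [OF \<open>special G \<H>\<close> subgroup_imp_group [OF P_sub]])
    show "subgroup (F H) (G\<lparr>carrier := P\<rparr>)" if "H \<in> \<H>" for H
      using subgroup_incl [OF F_sub [OF that] P_sub] by (simp add: F_def)
    show "F H \<noteq> carrier (G\<lparr>carrier := P\<rparr>)" if H: "H \<in> \<H>" for H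
    proof -
      have "p dvd sub_index G H"
        using \<open>p dvd d_G G \<H>\<close> H unfolding d_G_def by (meson Gcd_dvd dvd_trans imageI)
      then show ?thesis
        using sylow_Int_conj_sub_neq [OF fin p sylow sub [OF H] f_carrier [OF H]] by (simp add: F_def)
    qed
    show "normal_core (G\<lparr>carrier := P\<rparr>) (F H) <#>\<^bsub>G\<lparr>carrier := P\<rparr>\<^esub> F H' = carrier (G\<lparr>carrier := P\<rparr>)"
      if "H \<in> \<H>" "H' \<in> \<H>" "normal_core G H <#>\<^bsub>G\<^esub> H' = carrier G" for H H'
      using normal_core_sylow_Int_conj_set_mult_eq [OF fin p sylow sub sub f_carrier f_carrier]
        f_sylow that by (simp add: F_def)
  qed
  moreover have "F ` \<H> \<subseteq> H_P_set G P \<H> R"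
    unfolding H_P_set_def F_def using f_rep by blast
  ultimately show ?thesis
    by auto
qed

end
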